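(* Let $(B,\lfloor\cdot,\cdot\rfloor)$ be an SSD space with quadratic form $q$ and let $A\subset B$ be $q$-representable. If $\Phi_A(b)\ge q(b)$ for all $b\in\operatorname{conv}^w A$, then $A=G_{\Phi_A}$.
   Context: An SSD space is a pair $(B,\lfloor\cdot,\cdot\rfloor)$ with $B$ a nonzero real vector space and $\lfloor\cdot,\cdot\rfloor$ a symmetric bilinear form; $q(b)=\frac12\lfloor b,b\rfloor$. $w(B,B)$ is the coarsest topology on $B$ making all maps $b\mapsto\lfloor b,c\rfloor$ continuous; $\operatorname{conv}^w A$ is the $w(B,B)$-closure of the convex hull of $A$. A nonempty $A\subset B$ is $q$-positive if $q(b-c)\ge0$ for all $b,c\in A$. $\Phi_A(x)=\sup_{a\in A}\{\lfloor x,a\rfloor-q(a)\}$. For proper convex $f$, $f^{@}(b)=\sup_{c\in B}\{\lfloor c,b\rfloor-f(c)\}$, $\mathcal{P}_q(f)=\{b: f(b)=q(b)\}$, $G_f=\{b: f(b)+f^{@}(b)=\lfloor b,b\rfloor\}$. A $q$-positive set $A$ is $q$-representable if there is a $w(B,B)$-lsc proper convex $f:B\to\mathbb{R}\cup\{+\infty\}$ with $f\ge q$ on $B$ and $\mathcal{P}_q(f)=A$. *)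

theory Defs
  imports "HOL-Analysis.Analysis"
begin

definition SSD_space :: "('b::real_vector \<Rightarrow> 'b \<Rightarrow> real) \<Rightarrow> bool" where
  "SSD_space s \<longleftrightarrow> (\<exists>b::'b. b \<noteq> 0) \<and> (\<forall>x y. s x y = s y x) \<and>
     (\<forall>c. linear (\<lambda>x. s x c))"

definition qf :: "('b \<Rightarrow> 'b \<Rightarrow> real) \<Rightarrow> 'b \<Rightarrow> real" where
  "qf s b = s b b / 2"

definition wtop :: "('b \<Rightarrow> 'b \<Rightarrow> real) \<Rightarrow> 'b topology" where
  "wtop s = topology_generated_by {{x. s x c \<in> U} | c U. open U}"

definition conv_w :: "('b::real_vector \<Rightarrow> 'b \<Rightarrow> real) \<Rightarrow> 'b set \<Rightarrow> 'b set" where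
  "conv_w s A = (wtop s) closure_of (convex hull A)"

definition q_positive :: "('b::real_vector \<Rightarrow> 'b \<Rightarrow> real) \<Rightarrow> 'b set \<Rightarrow> bool" where
  "q_positive s A \<longleftrightarrow> A \<noteq> {} \<and> (\<forall>b\<in>A. \<forall>c\<in>A. qf s (b - c) \<ge> 0)"

definition PhiA :: "('b \<Rightarrow> 'b \<Rightarrow> real) \<Rightarrow> 'b set \<Rightarrow> 'b \<Rightarrow> ereal" where
  "PhiA s A x = (SUP a\<in>A. ereal (s x a - qf s a))"

text \<open>Functions B \<rightarrow> \<real> \<union> {+\<infinity>} are represented as ereal-valued functions never equal to -\<infinity>.\<close>
definition proper_fun :: "('b \<Rightarrow> ereal) \<Rightarrow> bool" where
  "proper_fun f \<longleftrightarrow> (\<forall>x. f x \<noteq> -\<infinity>) \<and> (\<exists>x. f x \<noteq> \<infinity>)"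

definition convex_fun :: "('b::real_vector \<Rightarrow> ereal) \<Rightarrow> bool" where
  "convex_fun f \<longleftrightarrow> (\<forall>x y (t::real). 0 \<le> t \<and> t \<le> 1 \<longrightarrow>
      f (t *\<^sub>R x + (1 - t) *\<^sub>R y) \<le> ereal t * f x + ereal (1 - t) * f y)"

definition lsc_in :: "'b topology \<Rightarrow> ('b \<Rightarrow> ereal) \<Rightarrow> bool" where
  "lsc_in T f \<longleftrightarrow> (\<forall>t::real. closedin T {x \<in> topspace T. f x \<le> ereal t})"

definition fenchel_at :: "('b \<Rightarrow> 'b \<Rightarrow> real) \<Rightarrow> ('b \<Rightarrow> ereal) \<Rightarrow> 'b \<Rightarrow> ereal" where
  "fenchel_at s f b = (SUP c. ereal (s c b) - f c)"

definition Pq :: "('b \<Rightarrow> 'b \<Rightarrow> real) \<Rightarrow> ('b \<Rightarrow> ereal) \<Rightarrow> 'b set" where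
  "Pq s f = {b. f b = ereal (qf s b)}"

definition Gf :: "('b \<Rightarrow> 'b \<Rightarrow> real) \<Rightarrow> ('b \<Rightarrow> ereal) \<Rightarrow> 'b set" where
  "Gf s f = {b. f b + fenchel_at s f b = ereal (s b b)}"

definition q_representable :: "('b::real_vector \<Rightarrow> 'b \<Rightarrow> real) \<Rightarrow> 'b set \<Rightarrow> bool" where
  "q_representable s A \<longleftrightarrow> q_positive s A \<and>
     (\<exists>f. lsc_in (wtop s) f \<and> proper_fun f \<and> convex_fun f \<and>
          (\<forall>b. f b \<ge> ereal (qf s b)) \<and> Pq s f = A)"

end

theory Submission
  imports Defs
begin

text \<open>
  Both \<open>PhiA s A\<close> and its Fenchel conjugate agree with \<open>q\<close> on a \<open>q\<close>-positive set \<open>A\<close>, which gives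
  \<open>A \<subseteq> G\<close>. Conversely, for \<open>b \<in> G\<close> the value of the conjugate at \<open>b\<close> is finite. Every
  \<open>w(B,B)\<close>-neighbourhood contains a cylinder cut out by finitely many functionals, so separating a
  point from a convex set reduces to the projection onto a convex set in a finite-dimensional
  Euclidean space. If \<open>b\<close> were outside \<open>conv\<^sup>w A\<close>, this would produce \<open>w\<close> with
  \<open>s a w \<ge> s b w + \<delta>\<close> on \<open>A\<close>, and moving along \<open>-w\<close> would make the conjugate infinite at \<open>b\<close>.
  Hence \<open>PhiA s A b \<ge> q b\<close>, so the conjugate is at most \<open>q b\<close> there. Finally, if a representative
  \<open>f\<close> of \<open>A\<close> had \<open>f b > q b\<close>, separating \<open>(b, r)\<close> with \<open>q b < r < f b\<close> from the epigraph of \<open>f\<close>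
  (closed by lower semicontinuity) would push the conjugate at \<open>b\<close> above \<open>q b\<close>.
\<close>

lemma nonneg_if_nonneg_plus_small_multiples:
  fixes P Q :: real
  assumes "\<And>t. 0 < t \<Longrightarrow> t \<le> 1 \<Longrightarrow> 0 \<le> P + t * Q"
  shows "0 \<le> P"
proof -
  have "((\<lambda>t. P + t * Q) \<longlongrightarrow> P) (at_right 0)"
    by (auto intro!: tendsto_eq_intros)
  moreover have "\<forall>\<^sub>F t in at_right 0. 0 \<le> P + t * Q"
    using assms by (auto simp: eventually_at_right_field intro!: exI[of _ 1])
  ultimately show ?thesis
    by (rule tendsto_lowerbound) simp
qed

lemma sum_sq_minimising_sequence_Cauchy:
  fixes D :: "('i \<Rightarrow> real) set"
  assumes "finite L" "i \<in> L"
    and midpoint: "\<And>d e. d \<in> D \<Longrightarrow> e \<in> D \<Longrightarrow> (\<lambda>j. d j / 2 + e j / 2) \<in> D"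
    and lower: "\<And>d. d \<in> D \<Longrightarrow> m \<le> (\<Sum>j\<in>L. (d j)\<^sup>2)"
    and y: "\<And>k. y k \<in> D" "\<And>k. (\<Sum>j\<in>L. (y k j)\<^sup>2) < m + 1 / (real k + 1)"
  shows "Cauchy (\<lambda>k. y k i)"
proof (rule metric_CauchyI)
  fix \<epsilon> :: real
  assume "\<epsilon> > 0"
  obtain M :: nat where M: "4 / \<epsilon>\<^sup>2 < real M + 1"
    by (metis reals_Archimedean2 less_add_one order_less_trans)
  have "dist (y j i) (y k i) < \<epsilon>" if "M \<le> j" "M \<le> k" for j k
  proof -
    have "m \<le> (\<Sum>l\<in>L. (y j l / 2 + y k l / 2)\<^sup>2)"
      using lower midpoint y(1) by blast
    \<comment> \<open>parallelogram law\<close>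
    moreover have "(\<Sum>l\<in>L. (y j l - y k l)\<^sup>2) = 2 * (\<Sum>l\<in>L. (y j l)\<^sup>2) + 2 * (\<Sum>l\<in>L. (y k l)\<^sup>2)
        - 4 * (\<Sum>l\<in>L. (y j l / 2 + y k l / 2)\<^sup>2)"
      by (simp add: sum_distrib_left sum_subtractf[symmetric] sum.distrib[symmetric]
          power2_eq_square algebra_simps)
    ultimately have "(\<Sum>l\<in>L. (y j l - y k l)\<^sup>2) \<le> 2 / (real j + 1) + 2 / (real k + 1)"
      using y(2)[of j] y(2)[of k] by linarith
    moreover have "(y j i - y k i)\<^sup>2 \<le> (\<Sum>l\<in>L. (y j l - y k l)\<^sup>2)"
      using assms(1,2) by (intro member_le_sum) auto
    moreover have "2 / (real j + 1) \<le> 2 / (real M + 1)" "2 / (real k + 1) \<le> 2 / (real M + 1)"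
      using that by (auto intro!: divide_left_mono)
    moreover have "2 / (real M + 1) < \<epsilon>\<^sup>2 / 2"
      using M \<open>\<epsilon> > 0\<close> by (simp add: field_simps)
    ultimately have "\<bar>y j i - y k i\<bar>\<^sup>2 < \<epsilon>\<^sup>2"
      by simp
    then show ?thesis
      using \<open>\<epsilon> > 0\<close> unfolding dist_real_def by (meson less_imp_le power2_less_imp_less)
  qed
  then show "\<exists>M. \<forall>j\<ge>M. \<forall>k\<ge>M. dist (y j i) (y k i) < \<epsilon>"
    by blast
qed

lemma sum_sq_convex_minimiser:
  fixes D :: "('i \<Rightarrow> real) set"
  assumes "finite L" "D \<noteq> {}"
    and convex: "\<And>d e t. d \<in> D \<Longrightarrow> e \<in> D \<Longrightarrow> 0 \<le> t \<Longrightarrow> t \<le> 1 \<Longrightarrow>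
      (\<lambda>j. t * d j + (1 - t) * e j) \<in> D"
  defines "m \<equiv> INF d\<in>D. \<Sum>j\<in>L. (d j)\<^sup>2"
  obtains a where "(\<Sum>j\<in>L. (a j)\<^sup>2) = m"
    "\<And>d t. d \<in> D \<Longrightarrow> 0 \<le> t \<Longrightarrow> t \<le> 1 \<Longrightarrow> m \<le> (\<Sum>j\<in>L. (t * d j + (1 - t) * a j)\<^sup>2)"
proof -
  have bdd: "bdd_below ((\<lambda>d. \<Sum>j\<in>L. (d j)\<^sup>2) ` D)"
    by (rule bdd_belowI[of _ 0]) (auto intro: sum_nonneg)
  have lower: "m \<le> (\<Sum>j\<in>L. (d j)\<^sup>2)" if "d \<in> D" for d
    unfolding m_def using bdd that by (simp add: cInf_lower)
  have "\<exists>d\<in>D. (\<Sum>j\<in>L. (d j)\<^sup>2) < m + 1 / (real k + 1)" for k :: nat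
  proof -
    have "(INF d\<in>D. \<Sum>j\<in>L. (d j)\<^sup>2) < m + 1 / (real k + 1)"
      unfolding m_def by simp
    then show ?thesis
      using cInf_less_iff[OF _ bdd] \<open>D \<noteq> {}\<close> by auto
  qed
  then obtain y where y: "\<And>k. y k \<in> D" "\<And>k. (\<Sum>j\<in>L. (y k j)\<^sup>2) < m + 1 / (real k + 1)"
    by metis
  have midpoint: "(\<lambda>j. d j / 2 + e j / 2) \<in> D" if "d \<in> D" "e \<in> D" for d e
    using convex[OF that, of "1 / 2"] by simp
  define a where "a i = lim (\<lambda>k. y k i)" for i
  have y_a: "(\<lambda>k. y k i) \<longlonglongrightarrow> a i" if "i \<in> L" for i
  proof -
    have "convergent (\<lambda>k. y k i)"
      using sum_sq_minimising_sequence_Cauchy[OF assms(1) that midpoint lower y]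
      by (rule Cauchy_convergent)
    then show ?thesis
      unfolding a_def by (rule convergent_LIMSEQ_iff[THEN iffD1])
  qed
  have combination_limit: "(\<lambda>k. \<Sum>j\<in>L. (t * d j + (1 - t) * y k j)\<^sup>2) \<longlonglongrightarrow>
      (\<Sum>j\<in>L. (t * d j + (1 - t) * a j)\<^sup>2)" for d t
    by (intro tendsto_intros y_a)
  show thesis
  proof
    have y_limit: "(\<lambda>k. \<Sum>j\<in>L. (y k j)\<^sup>2) \<longlonglongrightarrow> (\<Sum>j\<in>L. (a j)\<^sup>2)"
      using combination_limit[of 0] by simp
    moreover have "(\<lambda>k. m + 1 / (real k + 1)) \<longlonglongrightarrow> m"
    proof -
      have "(\<lambda>k. 1 / (real k + 1)) \<longlonglongrightarrow> 0"
        using LIMSEQ_inverse_real_of_nat by (simp add: inverse_eq_divide add.commute)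
      from tendsto_add[OF tendsto_const[of m] this] show ?thesis
        by simp
    qed
    ultimately have "(\<Sum>j\<in>L. (a j)\<^sup>2) \<le> m"
      using y(2) by (intro LIMSEQ_le) (auto intro: less_imp_le)
    moreover have "m \<le> (\<Sum>j\<in>L. (a j)\<^sup>2)"
      using y_limit by (rule tendsto_lowerbound) (auto intro!: always_eventually lower y(1))
    ultimately show "(\<Sum>j\<in>L. (a j)\<^sup>2) = m"
      by simp
  next
    fix d and t :: real
    assume "d \<in> D" "0 \<le> t" "t \<le> 1"
    then show "m \<le> (\<Sum>j\<in>L. (t * d j + (1 - t) * a j)\<^sup>2)"
      by (intro tendsto_lowerbound[OF combination_limit]) (auto intro!: always_eventually lower convex y(1))
  qed
qed

lemma sum_sq_convex_separation:
  fixes D :: "('i \<Rightarrow> real) set"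
  assumes "finite L" "D \<noteq> {}"
    and convex: "\<And>d e t. d \<in> D \<Longrightarrow> e \<in> D \<Longrightarrow> 0 \<le> t \<Longrightarrow> t \<le> 1 \<Longrightarrow>
      (\<lambda>j. t * d j + (1 - t) * e j) \<in> D"
    and away: "\<And>d. d \<in> D \<Longrightarrow> \<epsilon> \<le> (\<Sum>j\<in>L. (d j)\<^sup>2)"
  obtains a where "\<And>d. d \<in> D \<Longrightarrow> \<epsilon> \<le> (\<Sum>j\<in>L. a j * d j)"
proof -
  define m where "m = (INF d\<in>D. \<Sum>j\<in>L. (d j)\<^sup>2)"
  obtain a where a: "(\<Sum>j\<in>L. (a j)\<^sup>2) = m"
    and minimal: "\<And>d t. d \<in> D \<Longrightarrow> 0 \<le> t \<Longrightarrow> t \<le> 1 \<Longrightarrow> m \<le> (\<Sum>j\<in>L. (t * d j + (1 - t) * a j)\<^sup>2)"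
    using sum_sq_convex_minimiser[OF assms(1-3)] unfolding m_def by blast
  have "\<epsilon> \<le> m"
    unfolding m_def using \<open>D \<noteq> {}\<close> away by (auto intro!: cINF_greatest)
  show thesis
  proof
    fix d assume "d \<in> D"
    define P where "P = (\<Sum>j\<in>L. a j * (d j - a j))"
    define Q where "Q = (\<Sum>j\<in>L. (d j - a j)\<^sup>2)"
    have "0 \<le> 2 * P + t * Q" if "0 < t" "t \<le> 1" for t
    proof -
      have "(\<Sum>j\<in>L. (t * d j + (1 - t) * a j)\<^sup>2) = m + t * (2 * P + t * Q)"
        unfolding a[symmetric] P_def Q_def
        by (simp add: sum.distrib[symmetric] sum_distrib_left power2_eq_square algebra_simps)
      then show ?thesis
        using minimal[OF \<open>d \<in> D\<close>, of t] that by (simp add: zero_le_mult_iff)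
    qed
    then have "0 \<le> P"
      using nonneg_if_nonneg_plus_small_multiples[of "2 * P" Q] by simp
    moreover have "(\<Sum>j\<in>L. a j * d j) = P + m"
      unfolding a[symmetric] P_def by (simp add: sum.distrib[symmetric] power2_eq_square algebra_simps)
    ultimately show "\<epsilon> \<le> (\<Sum>j\<in>L. a j * d j)"
      using \<open>\<epsilon> \<le> m\<close> by linarith
  qed
qed

lemma wtop_topspace [simp]: "topspace (wtop s) = UNIV"
  unfolding wtop_def topology_generated_by_topspace
  by (rule set_eqI) (auto intro!: exI[of _ "{x. s x undefined \<in> UNIV}"])

lemma openin_wtop_cylinder_nbhd:
  assumes "openin (wtop s) U" "x \<in> U"
  obtains F \<epsilon> where "finite F" "0 < \<epsilon>" "{y. \<forall>c\<in>F. \<bar>s y c - s x c\<bar> < \<epsilon>} \<subseteq> U"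
proof -
  have "generate_topology_on {{x. s x c \<in> U} | c U. open U} U"
    using assms(1) unfolding wtop_def by (rule openin_topology_generated_by)
  then have "\<exists>F \<epsilon>. finite F \<and> 0 < \<epsilon> \<and> {y. \<forall>c\<in>F. \<bar>s y c - s x c\<bar> < \<epsilon>} \<subseteq> U"
    using assms(2)
  proof (induction arbitrary: x)
    case Empty
    then show ?case by simp
  next
    case (Int U1 U2)
    obtain F1 \<epsilon>1 where 1: "finite F1" "0 < \<epsilon>1" "{y. \<forall>c\<in>F1. \<bar>s y c - s x c\<bar> < \<epsilon>1} \<subseteq> U1"
      using Int.IH(1)[of x] Int.prems by auto
    obtain F2 \<epsilon>2 where 2: "finite F2" "0 < \<epsilon>2" "{y. \<forall>c\<in>F2. \<bar>s y c - s x c\<bar> < \<epsilon>2} \<subseteq> U2"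
      using Int.IH(2)[of x] Int.prems by auto
    show ?case
      by (rule exI[of _ "F1 \<union> F2"], rule exI[of _ "min \<epsilon>1 \<epsilon>2"]) (use 1 2 in auto)
  next
    case (UN K)
    then obtain k where "k \<in> K" "x \<in> k" by blast
    then show ?case using UN.IH[of k x] by blast
  next
    case (Basis S)
    then obtain c V where S: "S = {x. s x c \<in> V}" "open V" by blast
    with Basis have "s x c \<in> V" by simp
    then obtain \<epsilon> where "0 < \<epsilon>" "ball (s x c) \<epsilon> \<subseteq> V"
      using S(2) open_contains_ball by blast
    then show ?case
      by (intro exI[of _ "{c}"] exI[of _ \<epsilon>]) (auto simp: S dist_real_def)
  qed
  then show thesis
    using that by blast
qed

lemma PhiA_ge: "a \<in> A \<Longrightarrow> ereal (s x a - qf s a) \<le> PhiA s A x"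
  unfolding PhiA_def by (rule SUP_upper)

lemma PhiA_le: "(\<And>a. a \<in> A \<Longrightarrow> s x a - qf s a \<le> G) \<Longrightarrow> PhiA s A x \<le> ereal G"
  unfolding PhiA_def by (simp add: SUP_least)

lemma fenchel_at_ge: "ereal (s c b) - f c \<le> fenchel_at s f b"
  unfolding fenchel_at_def by (rule SUP_upper) simp

lemma ereal_minus_ge_ereal_minus: "y \<le> ereal z \<Longrightarrow> ereal (c - z) \<le> ereal c - y"
  by (cases y) auto

lemma Gf_fenchel_not_infinity: "b \<in> Gf s f \<Longrightarrow> fenchel_at s f b \<noteq> \<infinity>"
  unfolding Gf_def by auto

lemma Gf_fenchel_le_qf:
  assumes "b \<in> Gf s f" "ereal (qf s b) \<le> f b"
  shows "fenchel_at s f b \<le> ereal (qf s b)"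
  using assms unfolding Gf_def qf_def
  by (cases "f b"; cases "fenchel_at s f b") auto

lemma convex_epigraph:
  assumes "convex_fun f" "proper_fun f"
  shows "convex {(x, r). f x \<le> ereal r}"
proof (rule convexI, clarsimp)
  fix x r y r' and u v :: real
  assume xr: "f x \<le> ereal r" and yr: "f y \<le> ereal r'" and uv: "0 \<le> u" "0 \<le> v" "u + v = 1"
  obtain X Y where X: "f x = ereal X" "X \<le> r" and Y: "f y = ereal Y" "Y \<le> r'"
    using xr yr \<open>proper_fun f\<close> unfolding proper_fun_def by (cases "f x"; cases "f y") auto
  have "f (u *\<^sub>R x + v *\<^sub>R y) \<le> ereal u * f x + ereal v * f y"
    using \<open>convex_fun f\<close> uv unfolding convex_fun_def
    by (metis add_diff_cancel_left' le_add_same_cancel1)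
  also have "\<dots> = ereal (u * X + v * Y)"
    using X Y by simp
  also have "\<dots> \<le> ereal (u * r + v * r')"
    using X Y uv by (simp add: add_mono mult_left_mono)
  finally show "f (u *\<^sub>R x + v *\<^sub>R y) \<le> ereal (u * r + v * r')" .
qed

context
  fixes s :: "'b::real_vector \<Rightarrow> 'b \<Rightarrow> real"
  assumes ssd: "SSD_space s"
begin

lemma ssd_sym: "s x y = s y x"
  using ssd unfolding SSD_space_def by blast

lemma ssd_linear_left: "linear (\<lambda>x. s x c)"
  using ssd unfolding SSD_space_def by blast

lemma ssd_linear_right: "linear (s c)"
proof -
  have "s c = (\<lambda>x. s x c)"
    using ssd_sym by blast
  then show ?thesis
    using ssd_linear_left by simp
qed

lemma ssd_add_left [simp]: "s (x + y) c = s x c + s y c"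
  using linear_add[OF ssd_linear_left] .

lemma ssd_diff_left [simp]: "s (x - y) c = s x c - s y c"
  using linear_diff[OF ssd_linear_left] .

lemma ssd_minus_left [simp]: "s (- x) c = - s x c"
  using linear_neg[OF ssd_linear_left] .

lemma ssd_scale_left [simp]: "s (r *\<^sub>R x) c = r * s x c"
  using linear_scale[OF ssd_linear_left] by simp

lemma ssd_diff_right [simp]: "s c (x - y) = s c x - s c y"
  using linear_diff[OF ssd_linear_right] .

lemma ssd_scale_right [simp]: "s c (r *\<^sub>R x) = r * s c x"
  using linear_scale[OF ssd_linear_right] by simp

lemma ssd_sum_right [simp]: "s x (\<Sum>c\<in>F. a c *\<^sub>R c) = (\<Sum>c\<in>F. a c * s x c)"
  using linear_sum[OF ssd_linear_right, where g = "\<lambda>c. a c *\<^sub>R c" and S = F] by simp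

lemma qf_diff: "qf s (a - b) = qf s a - s a b + qf s b"
  unfolding qf_def using ssd_sym[of a b] by (simp add: field_simps)

lemma q_positive_pairing_le: "q_positive s A \<Longrightarrow> a \<in> A \<Longrightarrow> a' \<in> A \<Longrightarrow> s a a' - qf s a' \<le> qf s a"
  unfolding q_positive_def using qf_diff[of a a'] by force

lemma PhiA_eq_qf:
  assumes "q_positive s A" "a \<in> A"
  shows "PhiA s A a = ereal (qf s a)"
proof (rule antisym)
  show "PhiA s A a \<le> ereal (qf s a)"
    using q_positive_pairing_le[OF assms] by (rule PhiA_le)
  show "ereal (qf s a) \<le> PhiA s A a"
    using PhiA_ge[OF assms(2), where s = s and x = a] by (simp add: qf_def)
qed

lemma fenchel_PhiA_eq_qf:
  assumes "q_positive s A" "a \<in> A"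
  shows "fenchel_at s (PhiA s A) a = ereal (qf s a)"
proof (rule antisym)
  have "ereal (s c a) - PhiA s A c \<le> ereal (qf s a)" for c
    using PhiA_ge[OF assms(2), where s = s and x = c] by (cases "PhiA s A c") auto
  then show "fenchel_at s (PhiA s A) a \<le> ereal (qf s a)"
    unfolding fenchel_at_def by (rule SUP_least)
  show "ereal (qf s a) \<le> fenchel_at s (PhiA s A) a"
    using fenchel_at_ge[where s = s and c = a and b = a and f = "PhiA s A"] by (simp add: PhiA_eq_qf[OF assms] qf_def)
qed

lemma subset_Gf_PhiA: "q_positive s A \<Longrightarrow> A \<subseteq> Gf s (PhiA s A)"
  unfolding Gf_def by (auto simp: PhiA_eq_qf fenchel_PhiA_eq_qf qf_def)

lemma fenchel_PhiA_eq_infinity_if_separated: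
  assumes "q_positive s A" "0 < \<delta>" and separated: "\<And>a. a \<in> A \<Longrightarrow> s b w + \<delta> \<le> s a w"
  shows "fenchel_at s (PhiA s A) b = \<infinity>"
proof (rule ereal_top)
  fix B
  obtain a0 where a0: "a0 \<in> A"
    using assms(1) unfolding q_positive_def by blast
  define t where "t = max 0 ((B - s a0 b + qf s a0) / \<delta>)"
  have "t \<ge> 0"
    by (simp add: t_def)
  define x where "x = a0 - t *\<^sub>R w"
  \<comment> \<open>along \<open>a0 - t w\<close>, \<open>PhiA s A\<close> drops by \<open>t (s b w + \<delta>)\<close>, the pairing with \<open>b\<close> only by \<open>t s b w\<close>\<close>
  have "PhiA s A x \<le> ereal (qf s a0 - t * (s b w + \<delta>))"
  proof (rule PhiA_le)
    fix a assume a: "a \<in> A"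
    have "t * (s b w + \<delta>) \<le> t * s w a"
      using separated[OF a] ssd_sym[of w a] \<open>t \<ge> 0\<close> by (simp add: mult_left_mono)
    then show "s x a - qf s a \<le> qf s a0 - t * (s b w + \<delta>)"
      using q_positive_pairing_le[OF assms(1) a0 a] by (simp add: x_def)
  qed
  then have "ereal (s x b - (qf s a0 - t * (s b w + \<delta>))) \<le> fenchel_at s (PhiA s A) b"
    by (rule order_trans[OF ereal_minus_ge_ereal_minus fenchel_at_ge])
  moreover have "s x b - (qf s a0 - t * (s b w + \<delta>)) = s a0 b - qf s a0 + t * \<delta>"
    using ssd_sym[of w b] by (simp add: x_def algebra_simps)
  moreover have "B \<le> s a0 b - qf s a0 + t * \<delta>"
    using \<open>0 < \<delta>\<close> by (simp add: t_def max_def field_simps)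
  ultimately show "ereal B \<le> fenchel_at s (PhiA s A) b"
    by (metis ereal_less_eq(3) order_trans)
qed

lemma fenchel_PhiA_ge_if_separated:
  assumes "0 < \<mu>" and separated: "\<And>a. a \<in> A \<Longrightarrow> s b w + \<delta> \<le> \<mu> * (qf s a - r0) + s a w"
  shows "ereal (r0 + \<delta> / \<mu>) \<le> fenchel_at s (PhiA s A) b"
proof -
  define c where "c = (- 1 / \<mu>) *\<^sub>R w"
  define M where "M = - r0 - (s b w + \<delta>) / \<mu>"
  have "PhiA s A c \<le> ereal M"
  proof (rule PhiA_le)
    fix a assume "a \<in> A"
    then have "(s b w + \<delta>) / \<mu> \<le> (\<mu> * (qf s a - r0) + s a w) / \<mu>"
      using separated \<open>0 < \<mu>\<close> by (simp add: divide_right_mono)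
    also have "\<dots> = qf s a - r0 + s a w / \<mu>"
      using \<open>0 < \<mu>\<close> by (simp add: field_simps)
    finally show "s c a - qf s a \<le> M"
      using ssd_sym[of w a] by (simp add: c_def M_def)
  qed
  then have "ereal (s c b - M) \<le> fenchel_at s (PhiA s A) b"
    by (rule order_trans[OF ereal_minus_ge_ereal_minus fenchel_at_ge])
  moreover have "s c b - M = r0 + \<delta> / \<mu>"
    using ssd_sym[of w b] \<open>0 < \<mu>\<close> by (simp add: c_def M_def field_simps)
  ultimately show ?thesis
    by simp
qed

lemma separation_from_cylinder:
  fixes C :: "('b \<times> real) set"
  assumes "convex C" "C \<noteq> {}" "finite F" "0 < \<epsilon>"
    and away: "\<And>x r. (x, r) \<in> C \<Longrightarrow> \<epsilon> \<le> \<bar>r - r0\<bar> \<or> (\<exists>c\<in>F. \<epsilon> \<le> \<bar>s x c - s b c\<bar>)"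
  obtains \<mu> w \<delta> where "0 < \<delta>" "\<And>x r. (x, r) \<in> C \<Longrightarrow> s b w + \<delta> \<le> \<mu> * (r - r0) + s x w"
proof -
  \<comment> \<open>coordinates of \<open>(x, r) - (b, r0)\<close> under the functionals of the cylinder, \<open>None\<close> indexing \<open>r\<close>\<close>
  define u where "u = (\<lambda>(x, r) i. case i of None \<Rightarrow> r - r0 | Some c \<Rightarrow> s x c - s b c)"
  define L where "L = insert None (Some ` F)"
  have "finite L" "u ` C \<noteq> {}"
    using \<open>finite F\<close> \<open>C \<noteq> {}\<close> by (auto simp: L_def)
  have u_convex: "(\<lambda>i. t * u p i + (1 - t) * u p' i) \<in> u ` C"
    if "p \<in> C" "p' \<in> C" "0 \<le> t" "t \<le> 1" for p p' t
  proof -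
    have "(\<lambda>i. t * u p i + (1 - t) * u p' i) = u (t *\<^sub>R p + (1 - t) *\<^sub>R p')"
    proof
      fix i
      obtain x r x' r' where "p = (x, r)" "p' = (x', r')"
        by fastforce
      then show "t * u p i + (1 - t) * u p' i = u (t *\<^sub>R p + (1 - t) *\<^sub>R p') i"
        unfolding u_def by (cases i) (simp_all add: algebra_simps)
    qed
    moreover have "t *\<^sub>R p + (1 - t) *\<^sub>R p' \<in> C"
      using convexD[OF \<open>convex C\<close> that(1,2)] that(3,4) by simp
    ultimately show ?thesis
      by simp
  qed
  have u_away: "\<epsilon>\<^sup>2 \<le> (\<Sum>i\<in>L. (u p i)\<^sup>2)" if "p \<in> C" for p
  proof -
    obtain x r where "p = (x, r)"
      by fastforce
    then have "\<exists>i\<in>L. \<epsilon> \<le> \<bar>u p i\<bar>"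
      using away[of x r] \<open>p \<in> C\<close> unfolding L_def u_def by (auto intro: bexI[of _ None])
    then obtain i where "i \<in> L" "\<epsilon> \<le> \<bar>u p i\<bar>"
      by blast
    then have "\<epsilon>\<^sup>2 \<le> \<bar>u p i\<bar>\<^sup>2"
      using \<open>0 < \<epsilon>\<close> by (intro power_mono) auto
    also have "\<dots> \<le> (\<Sum>i\<in>L. (u p i)\<^sup>2)"
      using \<open>finite L\<close> \<open>i \<in> L\<close> by (auto intro: member_le_sum)
    finally show ?thesis .
  qed
  obtain a where a: "\<And>d. d \<in> u ` C \<Longrightarrow> \<epsilon>\<^sup>2 \<le> (\<Sum>i\<in>L. a i * d i)"
    using sum_sq_convex_separation[OF \<open>finite L\<close> \<open>u ` C \<noteq> {}\<close>, of "\<epsilon>\<^sup>2"] u_convex u_away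
    by blast
  show thesis
  proof
    show "0 < \<epsilon>\<^sup>2"
      using \<open>0 < \<epsilon>\<close> by simp
  next
    fix x r assume "(x, r) \<in> C"
    then have "\<epsilon>\<^sup>2 \<le> (\<Sum>i\<in>L. a i * u (x, r) i)"
      by (intro a) blast
    also have "\<dots> = a None * (r - r0) + (\<Sum>c\<in>F. a (Some c) * (s x c - s b c))"
      using \<open>finite F\<close> by (simp add: L_def u_def sum.reindex)
    also have "\<dots> = a None * (r - r0) + s x (\<Sum>c\<in>F. a (Some c) *\<^sub>R c) - s b (\<Sum>c\<in>F. a (Some c) *\<^sub>R c)"
      by (simp add: right_diff_distrib sum_subtractf)
    finally show "s b (\<Sum>c\<in>F. a (Some c) *\<^sub>R c) + \<epsilon>\<^sup>2
        \<le> a None * (r - r0) + s x (\<Sum>c\<in>F. a (Some c) *\<^sub>R c)"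
      by simp
  qed
qed

lemma separation_from_wtop_real_nbhd:
  fixes C :: "('b \<times> real) set"
  assumes "convex C" "C \<noteq> {}" "openin (wtop s) U" "b \<in> U" "open V" "r0 \<in> V"
    and disjoint: "C \<inter> U \<times> V = {}"
  obtains \<mu> w \<delta> where "0 < \<delta>" "\<And>x r. (x, r) \<in> C \<Longrightarrow> s b w + \<delta> \<le> \<mu> * (r - r0) + s x w"
proof -
  obtain F \<epsilon> where F: "finite F" "0 < \<epsilon>" "{y. \<forall>c\<in>F. \<bar>s y c - s b c\<bar> < \<epsilon>} \<subseteq> U"
    using openin_wtop_cylinder_nbhd[OF assms(3,4)] by blast
  obtain \<epsilon>' where "0 < \<epsilon>'" "ball r0 \<epsilon>' \<subseteq> V"
    using assms(5,6) open_contains_ball by blast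
  have away: "min \<epsilon> \<epsilon>' \<le> \<bar>r - r0\<bar> \<or> (\<exists>c\<in>F. min \<epsilon> \<epsilon>' \<le> \<bar>s x c - s b c\<bar>)"
    if "(x, r) \<in> C" for x r
  proof (rule ccontr)
    assume "\<not> ?thesis"
    then have "r \<in> V" "x \<in> U"
      using \<open>ball r0 \<epsilon>' \<subseteq> V\<close> F(3) by (force simp: dist_real_def)+
    then show False
      using disjoint that by blast
  qed
  have "0 < min \<epsilon> \<epsilon>'"
    using \<open>0 < \<epsilon>\<close> \<open>0 < \<epsilon>'\<close> by simp
  then show thesis
    by (rule separation_from_cylinder[OF assms(1,2) F(1) _ away that])
qed

lemma separation_outside_conv_w:
  assumes "b \<notin> conv_w s A" "A \<noteq> {}"
  obtains w \<delta> where "0 < \<delta>" "\<And>a. a \<in> A \<Longrightarrow> s b w + \<delta> \<le> s a w"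
proof -
  obtain U where U: "openin (wtop s) U" "b \<in> U" "U \<inter> convex hull A = {}"
    using assms(1) unfolding conv_w_def in_closure_of by auto
  have disjoint: "(convex hull A) \<times> {0 :: real} \<inter> U \<times> UNIV = {}"
    using U(3) by blast
  have "convex ((convex hull A) \<times> {0 :: real})" "(convex hull A) \<times> {0 :: real} \<noteq> {}"
    using assms(2) by (simp_all add: convex_Times)
  then obtain \<mu> w \<delta> where "0 < \<delta>"
    and separated: "\<And>x r. (x, r) \<in> (convex hull A) \<times> {0} \<Longrightarrow> s b w + \<delta> \<le> \<mu> * (r - 0) + s x w"
    by (rule separation_from_wtop_real_nbhd[OF _ _ U(1,2) open_UNIV UNIV_I[of "0 :: real"] disjoint]) auto
  show thesis
  proof (rule that[OF \<open>0 < \<delta>\<close>])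
    fix a assume "a \<in> A"
    then have "(a, 0) \<in> (convex hull A) \<times> {0}"
      by (simp add: hull_inc)
    then show "s b w + \<delta> \<le> s a w"
      using separated by fastforce
  qed
qed

lemma separation_from_epigraph:
  assumes "lsc_in (wtop s) f" "convex_fun f" "proper_fun f" "ereal r1 < f b" "r0 < r1"
  obtains \<mu> w \<delta> where "0 < \<delta>" "\<And>x r. f x \<le> ereal r \<Longrightarrow> s b w + \<delta> \<le> \<mu> * (r - r0) + s x w"
proof -
  define E where "E = {(x, r). f x \<le> ereal r}"
  have "convex E"
    unfolding E_def using assms(2,3) by (rule convex_epigraph)
  obtain x0 X0 where "f x0 = ereal X0"
    using assms(3) unfolding proper_fun_def by (metis ereal_cases)
  then have "(x0, X0) \<in> E"
    by (simp add: E_def)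
  then have "E \<noteq> {}"
    by blast
  have "openin (wtop s) (UNIV - {x. f x \<le> ereal r1})"
    using assms(1) unfolding lsc_in_def closedin_def by simp
  moreover have "b \<in> UNIV - {x. f x \<le> ereal r1}"
    using \<open>ereal r1 < f b\<close> by simp
  moreover have "r0 \<in> {..<r1}"
    using \<open>r0 < r1\<close> by simp
  moreover have "E \<inter> (UNIV - {x. f x \<le> ereal r1}) \<times> {..<r1} = {}"
    by (auto simp: E_def) (meson ereal_less_eq(3) less_imp_le order_trans)
  ultimately obtain \<mu> w \<delta> where "0 < \<delta>"
    and separated: "\<And>x r. (x, r) \<in> E \<Longrightarrow> s b w + \<delta> \<le> \<mu> * (r - r0) + s x w"
    by (rule separation_from_wtop_real_nbhd[OF \<open>convex E\<close> \<open>E \<noteq> {}\<close> _ _ open_lessThan]) auto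
  show thesis
  proof (rule that[OF \<open>0 < \<delta>\<close>])
    fix x r assume "f x \<le> ereal r"
    then show "s b w + \<delta> \<le> \<mu> * (r - r0) + s x w"
      by (intro separated) (simp add: E_def)
  qed
qed

lemma q_representable_mem_if_fenchel_PhiA_le_qf:
  assumes "q_representable s A" and fenchel_le: "fenchel_at s (PhiA s A) b \<le> ereal (qf s b)"
  shows "b \<in> A"
proof (rule ccontr)
  assume "b \<notin> A"
  obtain f where "lsc_in (wtop s) f" "proper_fun f" "convex_fun f" and f_ge: "\<And>x. ereal (qf s x) \<le> f x"
    and Pq: "Pq s f = A" and "q_positive s A"
    using assms(1) unfolding q_representable_def by blast
  have f_A: "a \<in> A \<longleftrightarrow> f a = ereal (qf s a)" for a
    using Pq unfolding Pq_def by blast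
  have "ereal (qf s b) < f b"
    using f_ge[of b] f_A[of b] \<open>b \<notin> A\<close> by auto
  then obtain r1 where "ereal (qf s b) < ereal r1" and r1: "ereal r1 < f b"
    using ereal_dense2 by blast
  define r0 where "r0 = (qf s b + r1) / 2"
  have r0: "qf s b < r0" "r0 < r1"
    using \<open>ereal (qf s b) < ereal r1\<close> by (simp_all add: r0_def)
  obtain \<mu> w \<delta> where "0 < \<delta>"
    and separated: "\<And>x r. f x \<le> ereal r \<Longrightarrow> s b w + \<delta> \<le> \<mu> * (r - r0) + s x w"
    by (rule separation_from_epigraph[OF \<open>lsc_in (wtop s) f\<close> \<open>convex_fun f\<close> \<open>proper_fun f\<close> r1 r0(2)])
      auto
  have separated_A: "s b w + \<delta> \<le> \<mu> * (r - r0) + s a w" if "a \<in> A" "qf s a \<le> r" for a r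
    using separated[of a r] f_A that by simp
  obtain a0 where "a0 \<in> A"
    using \<open>q_positive s A\<close> unfolding q_positive_def by blast
  \<comment> \<open>the epigraph is closed upwards in \<open>r\<close>\<close>
  have "0 \<le> \<mu>"
  proof (rule ccontr)
    assume "\<not> 0 \<le> \<mu>"
    define r where "r = max (qf s a0) (r0 + (s a0 w - s b w) / - \<mu>)"
    have "\<mu> * (r - r0) \<le> \<mu> * ((s a0 w - s b w) / - \<mu>)"
      using \<open>\<not> 0 \<le> \<mu>\<close> by (intro mult_left_mono_neg) (auto simp: r_def)
    then show False
      using separated_A[OF \<open>a0 \<in> A\<close>, of r] \<open>0 < \<delta>\<close> \<open>\<not> 0 \<le> \<mu>\<close> by (simp add: r_def)
  qed
  then consider "\<mu> = 0" | "0 < \<mu>"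
    by linarith
  then show False
  proof cases
    case 1
    then have "fenchel_at s (PhiA s A) b = \<infinity>"
      using separated_A \<open>0 < \<delta>\<close> \<open>q_positive s A\<close>
      by (intro fenchel_PhiA_eq_infinity_if_separated) auto
    then show False
      using fenchel_le by simp
  next
    case 2
    then have "ereal (r0 + \<delta> / \<mu>) \<le> fenchel_at s (PhiA s A) b"
      using separated_A by (intro fenchel_PhiA_ge_if_separated) auto
    moreover have "qf s b < r0 + \<delta> / \<mu>"
      using r0 2 \<open>0 < \<delta>\<close> divide_pos_pos[of \<delta> \<mu>] by linarith
    ultimately show False
      using fenchel_le by (metis ereal_less_eq(3) leD order_trans)
  qed
qed

end

theorem mainTheorem12:
  fixes s :: "'b::real_vector \<Rightarrow> 'b \<Rightarrow> real" and A :: "'b set"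
  assumes "SSD_space s"
    and "q_representable s A"
    and "\<forall>b\<in>conv_w s A. PhiA s A b \<ge> ereal (qf s b)"
  shows "A = Gf s (PhiA s A)"
proof (rule subset_antisym)
  have "q_positive s A" "A \<noteq> {}"
    using assms(2) unfolding q_representable_def q_positive_def by auto
  then show "A \<subseteq> Gf s (PhiA s A)"
    using subset_Gf_PhiA[OF assms(1)] by blast
  show "Gf s (PhiA s A) \<subseteq> A"
  proof
    fix b assume b: "b \<in> Gf s (PhiA s A)"
    have "b \<in> conv_w s A"
    proof (rule ccontr)
      assume "b \<notin> conv_w s A"
      then obtain w \<delta> where "0 < \<delta>" "\<And>a. a \<in> A \<Longrightarrow> s b w + \<delta> \<le> s a w"
        using separation_outside_conv_w[OF assms(1) _ \<open>A \<noteq> {}\<close>] by blast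
      then have "fenchel_at s (PhiA s A) b = \<infinity>"
        by (rule fenchel_PhiA_eq_infinity_if_separated[OF assms(1) \<open>q_positive s A\<close>])
      then show False
        using Gf_fenchel_not_infinity[OF b] by simp
    qed
    then have "fenchel_at s (PhiA s A) b \<le> ereal (qf s b)"
      using Gf_fenchel_le_qf[OF b] assms(3) by blast
    then show "b \<in> A"
      by (rule q_representable_mem_if_fenchel_PhiA_le_qf[OF assms(1,2)])
  qed
qed

end
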